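(* Let $G$ be a prime graph and let $A,B$ be disjoint subsets of $V(G)$ with $|A|,|B|\ge 2$. Suppose there exist nonempty sets $A_0\subseteq A$ and $B_0\subseteq B$ such that the set of all edges between $A$ and $B$ is $\{xy: x\in A_0,\ y\in B_0\}$. Let $\ell_0=3$ if $|A_0|=|B_0|=1$; $\ell_0=4$ if exactly one of $|A_0|=1$, $|B_0|=1$ holds (i.e. $|A_0|=1$ or $|B_0|=1$ but not both); and $\ell_0=6$ otherwise. Then there exists a graph $G'$ locally equivalent to $G$ such that (i) $G[A\cup B]=G'[A\cup B]$, and (ii) $G'$ has a blocking sequence for $(A,B)$ of length at most $\ell_0$.
   Context: Graphs are finite, simple, undirected. $G*v$ is local complementation at $v$; two graphs are locally equivalent if one is obtained from the other by a sequence of local complementations. A split of $G$ is a partition $(X,Y)$ of $V(G)$ with $|X|,|Y|\ge2$ such that there are $X'\subseteq X,Y'\subseteq Y$ with $x\in X$ adjacent to $y\in Y$ iff $x\in X'$ and $y\in Y'$; $G$ is prime if it has no split. For disjoint $X,Y$, $\rho^*_G(X,Y)$ is the binary rank of the adjacency submatrix with rows $X$, columns $Y$. A blocking sequence for disjoint $(A,B)$ is a sequence $v_1,\dots,v_m$ ($m\ge1$) of vertices of $V(G)\setminus(A\cup B)$ with (a) $\rho^*_G(A,B\cup\{v_1\})>\rho^*_G(A,B)$; (b) $\rho^*_G(A\cup\{v_i\},B\cup\{v_{i+1}\})>\rho^*_G(A,B)$ for $i=1,\dots,m-1$; (c) $\rho^*_G(A\cup\{v_m\},B)>\rho^*_G(A,B)$;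 (d) no proper subsequence satisfies (a)–(c). Its length is $m$. *)

theory Defs
  imports Main "HOL-Library.Sublist"
begin

definition graph :: "'a set \<Rightarrow> ('a \<Rightarrow> 'a \<Rightarrow> bool) \<Rightarrow> bool" where
  "graph V E \<longleftrightarrow> finite V \<and> (\<forall>x y. E x y \<longrightarrow> E y x) \<and> (\<forall>x. \<not> E x x)
     \<and> (\<forall>x y. E x y \<longrightarrow> x \<in> V \<and> y \<in> V)"

definition local_comp :: "('a \<Rightarrow> 'a \<Rightarrow> bool) \<Rightarrow> 'a \<Rightarrow> ('a \<Rightarrow> 'a \<Rightarrow> bool)" where
  "local_comp E v = (\<lambda>x y. if x \<noteq> y \<and> E v x \<and> E v y then \<not> E x y else E x y)"

inductive locally_equiv :: "'a set \<Rightarrow> ('a \<Rightarrow> 'a \<Rightarrow> bool) \<Rightarrow> ('a \<Rightarrow> 'a \<Rightarrow> bool) \<Rightarrow> bool"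
  for V where
  refl: "locally_equiv V E E"
| step: "locally_equiv V E E' \<Longrightarrow> v \<in> V \<Longrightarrow> locally_equiv V E (local_comp E' v)"

definition is_split :: "'a set \<Rightarrow> ('a \<Rightarrow> 'a \<Rightarrow> bool) \<Rightarrow> 'a set \<Rightarrow> 'a set \<Rightarrow> bool" where
  "is_split V E X Y \<longleftrightarrow> X \<inter> Y = {} \<and> X \<union> Y = V \<and> card X \<ge> 2 \<and> card Y \<ge> 2 \<and>
     (\<exists>X' Y'. X' \<subseteq> X \<and> Y' \<subseteq> Y \<and> (\<forall>x\<in>X. \<forall>y\<in>Y. E x y \<longleftrightarrow> x \<in> X' \<and> y \<in> Y'))"

definition prime_graph :: "'a set \<Rightarrow> ('a \<Rightarrow> 'a \<Rightarrow> bool) \<Rightarrow> bool" where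
  "prime_graph V E \<longleftrightarrow> (\<nexists>X Y. is_split V E X Y)"

text \<open>A set R of
  rows is GF(2)-independent iff no nonempty subset of R sums to the zero vector,
  i.e. for every nonempty T \<subseteq> R some column y has an odd number of ones in rows T.\<close>
definition gf2_indep_rows :: "('a \<Rightarrow> 'a \<Rightarrow> bool) \<Rightarrow> 'a set \<Rightarrow> 'a set \<Rightarrow> bool" where
  "gf2_indep_rows E R Y \<longleftrightarrow>
     (\<forall>T. T \<subseteq> R \<and> T \<noteq> {} \<longrightarrow> (\<exists>y\<in>Y. odd (card {x\<in>T. E x y})))"

definition cut_rank :: "('a \<Rightarrow> 'a \<Rightarrow> bool) \<Rightarrow> 'a set \<Rightarrow> 'a set \<Rightarrow> nat" where
  "cut_rank E X Y = Max (card ` {R. R \<subseteq> X \<and> gf2_indep_rows E R Y})"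

definition blocking_cond :: "('a \<Rightarrow> 'a \<Rightarrow> bool) \<Rightarrow> 'a set \<Rightarrow> 'a set \<Rightarrow> 'a list \<Rightarrow> bool" where
  "blocking_cond E A B vs \<longleftrightarrow> vs \<noteq> [] \<and>
     cut_rank E A (B \<union> {vs ! 0}) > cut_rank E A B \<and>
     (\<forall>i. i + 1 < length vs \<longrightarrow>
        cut_rank E (A \<union> {vs ! i}) (B \<union> {vs ! (i+1)}) > cut_rank E A B) \<and>
     cut_rank E (A \<union> {last vs}) B > cut_rank E A B"

definition blocking_sequence ::
  "'a set \<Rightarrow> ('a \<Rightarrow> 'a \<Rightarrow> bool) \<Rightarrow> 'a set \<Rightarrow> 'a set \<Rightarrow> 'a list \<Rightarrow> bool" where
  "blocking_sequence V E A B vs \<longleftrightarrow>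
     set vs \<subseteq> V - (A \<union> B) \<and> blocking_cond E A B vs \<and>
     (\<forall>ws. subseq ws vs \<and> ws \<noteq> vs \<longrightarrow> \<not> blocking_cond E A B ws)"

end

theory Submission
  imports Defs
begin

text \<open>Since the edges between A and B are exactly A0 \<times> B0, the cut (A, B) has rank 1, and a vertex
  outside A \<union> B raises it only if it is wild (its neighbourhood in A is neither empty nor A0, or
  likewise for B), while a pair of tame vertices u, w raises it exactly when the edge uw differs from
  what the types of u and w force. Hence blocking sequences are the shortest walks from an A-wild to a
  B-wild vertex through such linked pairs, and primeness guarantees a walk: otherwise the vertices from
  which a B-wild vertex is reachable, added to B, give a split.

  Among all graphs locally equivalent to G that agree with G on A \<union> B take a shortest walk. Its inner
  vertices are tame, and each has a type: whether it is adjacent to A0 and whether to B0. If the walk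
  were longer than the bound, either some inner vertex v has at most one neighbour in A \<union> B, so that
  G * v fixes G[A \<union> B], or two inner vertices c, d have the same nonzero type, and then G * c * d (for
  cd a non-edge) or the pivot G * c * d * c (for cd an edge) fixes G[A \<union> B]. In each case the new graph
  carries a shorter walk, obtained by cutting out c (and possibly its successor), contradicting
  minimality.\<close>

section \<open>Binary rank of adjacency submatrices\<close>

lemma card_filter_singleton: "card {z\<in>{x}. P z} = (if P x then 1 else 0)"
proof -
  have "{z\<in>{x}. P z} = (if P x then {x} else {})"
    by auto
  then show ?thesis by simp
qed

lemma odd_card_filter_pair:
  assumes "x \<noteq> x'"
  shows "odd (card {z\<in>{x, x'}. P z}) \<longleftrightarrow> P x \<noteq> P x'"
proof -
  have "{z\<in>{x, x'}. P z} = {z\<in>{x}. P z} \<union> {z\<in>{x'}. P z}"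
    by blast
  then have "card {z\<in>{x, x'}. P z} = card {z\<in>{x}. P z} + card {z\<in>{x'}. P z}"
    using assms by (simp add: card_Un_disjoint disjoint_iff)
  then show ?thesis by (simp only: card_filter_singleton) simp
qed

lemma gf2_indep_rows_singleton: "gf2_indep_rows E {x} Y \<longleftrightarrow> (\<exists>y\<in>Y. E x y)"
proof -
  have "T \<subseteq> {x} \<and> T \<noteq> {} \<longleftrightarrow> T = {x}" for T :: "'a set"
    by blast
  then have "gf2_indep_rows E {x} Y \<longleftrightarrow> (\<exists>y\<in>Y. odd (card {z\<in>{x}. E z y}))"
    unfolding gf2_indep_rows_def by (simp only: simp_thms)
  then show ?thesis by (simp only: card_filter_singleton) simp
qed

lemma gf2_indep_rows_pair:
  assumes "x \<noteq> x'"
  shows "gf2_indep_rows E {x, x'} Y \<longleftrightarrow>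
           (\<exists>y\<in>Y. E x y) \<and> (\<exists>y\<in>Y. E x' y) \<and> (\<exists>y\<in>Y. E x y \<noteq> E x' y)"
proof -
  have "T \<subseteq> {x, x'} \<and> T \<noteq> {} \<longleftrightarrow> T = {x} \<or> T = {x'} \<or> T = {x, x'}" for T :: "'a set"
    by blast
  then have "gf2_indep_rows E {x, x'} Y \<longleftrightarrow>
      (\<exists>y\<in>Y. odd (card {z\<in>{x}. E z y})) \<and> (\<exists>y\<in>Y. odd (card {z\<in>{x'}. E z y})) \<and>
      (\<exists>y\<in>Y. odd (card {z\<in>{x, x'}. E z y}))"
    unfolding gf2_indep_rows_def by (simp only: imp_disjL all_conj_distrib simp_thms)
  then show ?thesis
    by (simp only: card_filter_singleton odd_card_filter_pair[OF assms]) simp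
qed

lemma gf2_indep_rows_mono: "gf2_indep_rows E R Y \<Longrightarrow> S \<subseteq> R \<Longrightarrow> gf2_indep_rows E S Y"
  unfolding gf2_indep_rows_def by blast

lemma cut_rank_ge_iff:
  assumes "finite X"
  shows "k \<le> cut_rank E X Y \<longleftrightarrow> (\<exists>R\<subseteq>X. gf2_indep_rows E R Y \<and> k \<le> card R)"
proof -
  let ?S = "card ` {R. R \<subseteq> X \<and> gf2_indep_rows E R Y}"
  have "finite ?S" using assms by simp
  moreover have "gf2_indep_rows E {} Y" unfolding gf2_indep_rows_def by blast
  then have "?S \<noteq> {}" by blast
  ultimately have "k \<le> Max ?S \<longleftrightarrow> (\<exists>n\<in>?S. k \<le> n)" by (rule Max_ge_iff)
  then show ?thesis unfolding cut_rank_def by blast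
qed

lemma cut_rank_pos:
  assumes "finite X" "x \<in> X" "y \<in> Y" "E x y"
  shows "1 \<le> cut_rank E X Y"
proof -
  have "{x} \<subseteq> X" "gf2_indep_rows E {x} Y" "1 \<le> card {x}"
    using assms unfolding gf2_indep_rows_singleton by auto
  then have "\<exists>R\<subseteq>X. gf2_indep_rows E R Y \<and> 1 \<le> card R"
    by blast
  then show ?thesis by (rule cut_rank_ge_iff[OF assms(1), THEN iffD2])
qed

definition two_distinct_nonzero_rows :: "('a \<Rightarrow> 'a \<Rightarrow> bool) \<Rightarrow> 'a set \<Rightarrow> 'a set \<Rightarrow> bool" where
  "two_distinct_nonzero_rows E X Y \<longleftrightarrow>
     (\<exists>x\<in>X. \<exists>x'\<in>X. (\<exists>y\<in>Y. E x y) \<and> (\<exists>y\<in>Y. E x' y) \<and> (\<exists>y\<in>Y. E x y \<noteq> E x' y))"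

lemma cut_rank_ge_2_iff:
  assumes "finite X"
  shows "2 \<le> cut_rank E X Y \<longleftrightarrow> two_distinct_nonzero_rows E X Y"
  unfolding two_distinct_nonzero_rows_def
proof
  let ?rows = "\<lambda>x x'. (\<exists>y\<in>Y. E x y) \<and> (\<exists>y\<in>Y. E x' y) \<and> (\<exists>y\<in>Y. E x y \<noteq> E x' y)"
  assume "2 \<le> cut_rank E X Y"
  then obtain R where R: "R \<subseteq> X" "gf2_indep_rows E R Y" "2 \<le> card R"
    using cut_rank_ge_iff[OF assms, THEN iffD1] by blast
  have "finite R" using R(3) by (metis card.infinite not_numeral_le_zero)
  with R(3) have "\<not> (\<forall>a\<in>R. \<forall>b\<in>R. a = b)"
    using card_le_Suc0_iff_eq[of R] by simp
  then obtain x x' where xx': "x \<in> R" "x' \<in> R" "x \<noteq> x'"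
    by blast
  then have "gf2_indep_rows E {x, x'} Y"
    using gf2_indep_rows_mono[OF R(2), of "{x, x'}"] by simp
  then have "?rows x x'"
    by (simp only: gf2_indep_rows_pair[OF xx'(3)])
  then show "\<exists>x\<in>X. \<exists>x'\<in>X. ?rows x x'"
    using R(1) xx'(1,2) by blast
next
  let ?rows = "\<lambda>x x'. (\<exists>y\<in>Y. E x y) \<and> (\<exists>y\<in>Y. E x' y) \<and> (\<exists>y\<in>Y. E x y \<noteq> E x' y)"
  assume "\<exists>x\<in>X. \<exists>x'\<in>X. ?rows x x'"
  then obtain x x' where x: "x \<in> X" "x' \<in> X" and rows: "?rows x x'" by blast
  then have "x \<noteq> x'" by blast
  with rows have "gf2_indep_rows E {x, x'} Y"
    by (simp only: gf2_indep_rows_pair[OF \<open>x \<noteq> x'\<close>])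
  moreover have "card {x, x'} = 2" using \<open>x \<noteq> x'\<close> by simp
  ultimately have "\<exists>R\<subseteq>X. gf2_indep_rows E R Y \<and> 2 \<le> card R"
    using x by (metis empty_subsetI insert_subset order_refl)
  then show "2 \<le> cut_rank E X Y" by (rule cut_rank_ge_iff[OF assms, THEN iffD2])
qed

lemma two_distinct_nonzero_rows_insert:
  assumes rows: "\<And>x. x \<in> X \<Longrightarrow> (\<forall>y\<in>Y. \<not> E x y) \<or> (\<forall>y\<in>Y. E x y = r y)"
    and full: "x\<^sub>0 \<in> X" "\<forall>y\<in>Y. E x\<^sub>0 y = r y" and r: "\<exists>y\<in>Y. r y"
  shows "two_distinct_nonzero_rows E (insert u X) Y \<longleftrightarrow> (\<exists>y\<in>Y. E u y) \<and> (\<exists>y\<in>Y. E u y \<noteq> r y)"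
  unfolding two_distinct_nonzero_rows_def
proof
  assume "\<exists>x\<in>insert u X. \<exists>x'\<in>insert u X.
      (\<exists>y\<in>Y. E x y) \<and> (\<exists>y\<in>Y. E x' y) \<and> (\<exists>y\<in>Y. E x y \<noteq> E x' y)"
  then obtain x x' where x: "x \<in> insert u X" "x' \<in> insert u X" "\<exists>y\<in>Y. E x y" "\<exists>y\<in>Y. E x' y"
    and differ: "\<exists>y\<in>Y. E x y \<noteq> E x' y" by blast
  have r_row: "\<forall>y\<in>Y. E z y = r y" if "z \<in> X" "\<exists>y\<in>Y. E z y" for z
    using rows[OF that(1)] that(2) by blast
  consider "x \<in> X" "x' \<in> X" | "x = u" "x' \<in> X" | "x \<in> X" "x' = u" | "x = u" "x' = u"
    using x(1,2) by blast
  then show "(\<exists>y\<in>Y. E u y) \<and> (\<exists>y\<in>Y. E u y \<noteq> r y)"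
  proof cases
    case 1 then show ?thesis using r_row x(3,4) differ by (metis (full_types))
  next
    case 2 then show ?thesis using r_row[of x'] x(3,4) differ by metis
  next
    case 3 then show ?thesis using r_row[of x] x(3,4) differ by metis
  next
    case 4 then show ?thesis using differ by blast
  qed
next
  assume "(\<exists>y\<in>Y. E u y) \<and> (\<exists>y\<in>Y. E u y \<noteq> r y)"
  then show "\<exists>x\<in>insert u X. \<exists>x'\<in>insert u X.
      (\<exists>y\<in>Y. E x y) \<and> (\<exists>y\<in>Y. E x' y) \<and> (\<exists>y\<in>Y. E x y \<noteq> E x' y)"
    using full r by (intro bexI[of _ u] bexI[of _ "x\<^sub>0"]) auto
qed

section \<open>Walks\<close>

definition walk :: "('a \<Rightarrow> bool) \<Rightarrow> ('a \<Rightarrow> bool) \<Rightarrow> ('a \<Rightarrow> 'a \<Rightarrow> bool) \<Rightarrow> 'a list \<Rightarrow> bool" where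
  "walk start finish adj L \<longleftrightarrow> L \<noteq> [] \<and> start (L!0) \<and> finish (last L) \<and>
     (\<forall>i. i + 1 < length L \<longrightarrow> adj (L!i) (L!(i+1)))"

lemma walk_cong:
  assumes "\<And>x. x \<in> set L \<Longrightarrow> start x = start' x" "\<And>x. x \<in> set L \<Longrightarrow> finish x = finish' x"
  shows "walk start finish adj L = walk start' finish' adj L"
proof -
  have "L \<noteq> [] \<Longrightarrow> L!0 \<in> set L" by simp
  moreover have "L \<noteq> [] \<Longrightarrow> last L \<in> set L" by simp
  ultimately show ?thesis unfolding walk_def using assms by (metis (no_types, lifting))
qed

lemma walk_Cons:
  assumes "walk start' finish adj L" "start x" "adj x (L!0)"
  shows "walk start finish adj (x # L)"
proof -
  have "adj ((x#L)!i) ((x#L)!(i+1))" if "i + 1 < length (x#L)" for i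
  proof (cases i)
    case 0 then show ?thesis using assms(3) by simp
  next
    case (Suc k) then show ?thesis using assms(1) that unfolding walk_def by simp
  qed
  then show ?thesis using assms(1,2) unfolding walk_def by simp
qed

lemma nth_take_append_drop:
  "k < length (take i L @ drop j L) \<Longrightarrow> i \<le> j \<Longrightarrow> j \<le> length L \<Longrightarrow>
    (take i L @ drop j L) ! k = (if k < i then L!k else L!(k - i + j))"
  by (auto simp: nth_append min_def add.commute)

lemma adj_take_append_drop:
  assumes ij: "i \<le> j" "j \<le> length L"
    and before: "\<And>k. k + 1 < i \<Longrightarrow> adj (L!k) (L!(k+1))"
    and after: "\<And>k. j \<le> k \<Longrightarrow> k + 1 < length L \<Longrightarrow> adj (L!k) (L!(k+1))"
    and across: "0 < i \<Longrightarrow> j < length L \<Longrightarrow> adj (L!(i-1)) (L!j)"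
    and k: "k + 1 < length (take i L @ drop j L)"
  shows "adj ((take i L @ drop j L)!k) ((take i L @ drop j L)!(k+1))"
proof -
  let ?M = "take i L @ drop j L"
  have len: "length ?M = i + (length L - j)" using ij by simp
  have a: "?M!k = (if k < i then L!k else L!(k - i + j))"
    using nth_take_append_drop[of k i L j] ij k by simp
  have b: "?M!(k+1) = (if k+1 < i then L!(k+1) else L!(k + 1 - i + j))"
    using nth_take_append_drop[of "k+1" i L j] ij k by simp
  consider "k + 1 < i" | "k + 1 = i" | "i \<le> k" by linarith
  then show ?thesis
  proof cases
    case 1 then show ?thesis using a b before by simp
  next
    case 2
    then have "j < length L" using k len by auto
    then show ?thesis using a b across 2 by auto
  next
    case 3
    moreover have "k - i + j + 1 < length L" using k len ij 3 by auto
    moreover have "k + 1 - i + j = (k - i + j) + 1" using 3 by simp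
    ultimately show ?thesis using a b after[of "k - i + j"] by auto
  qed
qed

lemma walk_take_append_drop:
  assumes ij: "i \<le> j" "j \<le> length L" "0 < i \<or> j < length L"
    and start1: "0 < i \<Longrightarrow> start (L!0)" and start2: "i = 0 \<Longrightarrow> start (L!j)"
    and finish1: "j < length L \<Longrightarrow> finish (L!(length L - 1))"
    and finish2: "j = length L \<Longrightarrow> finish (L!(i-1))"
    and before: "\<And>k. k + 1 < i \<Longrightarrow> adj (L!k) (L!(k+1))"
    and after: "\<And>k. j \<le> k \<Longrightarrow> k + 1 < length L \<Longrightarrow> adj (L!k) (L!(k+1))"
    and across: "0 < i \<Longrightarrow> j < length L \<Longrightarrow> adj (L!(i-1)) (L!j)"
  shows "walk start finish adj (take i L @ drop j L)"
proof -
  let ?M = "take i L @ drop j L"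
  have len: "length ?M = i + (length L - j)" using ij by simp
  have ne: "?M \<noteq> []" using ij len by auto
  have nth: "\<And>k. k < length ?M \<Longrightarrow> ?M ! k = (if k < i then L!k else L!(k - i + j))"
    using nth_take_append_drop ij by blast
  have "start (?M!0)"
    using nth[of 0] ne start1 start2 len ij by (cases "0 < i") auto
  moreover have "finish (last ?M)"
  proof (cases "j < length L")
    case True
    then have "?M ! (length ?M - 1) = L ! (length L - 1)"
      using nth[of "length ?M - 1"] len ij ne by auto
    then show ?thesis using finish1 True ne by (simp add: last_conv_nth)
  next
    case False
    then have "j = length L" "0 < i" using ij by auto
    then have "?M ! (length ?M - 1) = L ! (i - 1)" using nth[of "length ?M - 1"] len by auto
    then show ?thesis using finish2 \<open>j = length L\<close> ne by (simp add: last_conv_nth)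
  qed
  ultimately show ?thesis
    unfolding walk_def using ne adj_take_append_drop[OF ij(1,2) before after across] by blast
qed

section \<open>Local complementation\<close>

lemma graph_local_comp: "graph V F \<Longrightarrow> c \<in> V \<Longrightarrow> graph V (local_comp F c)"
  unfolding graph_def local_comp_def by auto

lemma graph_locally_equiv: "locally_equiv V E F \<Longrightarrow> graph V E \<Longrightarrow> graph V F"
  by (induction rule: locally_equiv.induct) (auto intro: graph_local_comp)

lemma locally_equiv_trans: "locally_equiv V F G \<Longrightarrow> locally_equiv V E F \<Longrightarrow> locally_equiv V E G"
  by (induction rule: locally_equiv.induct) (auto intro: locally_equiv.step)

lemma locally_equiv_local_comp: "c \<in> V \<Longrightarrow> locally_equiv V F (local_comp F c)"
  by (rule locally_equiv.step[OF locally_equiv.refl])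

lemma local_comp_agrees_on:
  assumes "\<forall>x\<in>U. \<forall>y\<in>U. F c x \<and> F c y \<longrightarrow> x = y"
  shows "\<forall>x\<in>U. \<forall>y\<in>U. local_comp F c x y = F x y"
  using assms unfolding local_comp_def by auto

lemma local_comp_twins_agrees_on:
  assumes "\<not> F c d" "c \<notin> U" "d \<notin> U" "\<forall>x\<in>U. F c x = F d x"
  shows "\<forall>x\<in>U. \<forall>y\<in>U. local_comp (local_comp F c) d x y = F x y"
proof (intro ballI)
  fix x y assume x: "x \<in> U" and y: "y \<in> U"
  have "local_comp F c d x = F d x" "local_comp F c d y = F d y"
    using assms(1) unfolding local_comp_def by auto
  then show "local_comp (local_comp F c) d x y = F x y"
    using assms(4) x y unfolding local_comp_def by (auto split: if_splits)
qed

lemma pivot_twins_agrees_on: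
  assumes g: "graph V F" and "F c d" "c \<notin> U" "d \<notin> U" "\<forall>x\<in>U. F c x = F d x"
  shows "\<forall>x\<in>U. \<forall>y\<in>U. local_comp (local_comp (local_comp F c) d) c x y = F x y"
proof (intro ballI)
  fix x y assume x: "x \<in> U" and y: "y \<in> U"
  have irr: "\<And>x. \<not> F x x" and sym: "\<And>x y. F x y = F y x" using g unfolding graph_def by blast+
  define F1 where "F1 = local_comp F c"
  define F2 where "F2 = local_comp F1 d"
  have F1d: "\<And>z. z \<in> U \<Longrightarrow> \<not> F1 d z"
    using assms(2-5) irr unfolding F1_def local_comp_def by (auto simp: sym)
  have F1xy: "F1 x y = (if x \<noteq> y \<and> F c x \<and> F c y then \<not> F x y else F x y)"
    unfolding F1_def local_comp_def by simp
  have F2xy: "F2 x y = F1 x y" using F1d x y unfolding F2_def local_comp_def by auto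
  have F1c: "\<And>z. F1 c z = F c z" using irr unfolding F1_def local_comp_def by auto
  have F2c: "\<And>z. z \<in> U \<Longrightarrow> F2 c z = F c z"
    using F1d F1c unfolding F2_def local_comp_def by (auto simp: sym)
  show "local_comp F2 c x y = F x y"
    using F2xy F1xy F2c x y unfolding local_comp_def by auto
qed
section \<open>Cuts whose edges form a complete bipartite graph\<close>

locale rank_one_cut =
  fixes A B A0 B0 :: "'a set"
  assumes finite_A: "finite A" and finite_B: "finite B" and disjoint_sides: "A \<inter> B = {}"
    and A0_sub: "A0 \<subseteq> A" and B0_sub: "B0 \<subseteq> B" and A0_ne: "A0 \<noteq> {}" and B0_ne: "B0 \<noteq> {}"
begin

definition cut_pattern :: "('a \<Rightarrow> 'a \<Rightarrow> bool) \<Rightarrow> bool" where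
  "cut_pattern F \<longleftrightarrow> (\<forall>x\<in>A. \<forall>y\<in>B. F x y \<longleftrightarrow> x \<in> A0 \<and> y \<in> B0)"

definition nbr_A :: "('a \<Rightarrow> 'a \<Rightarrow> bool) \<Rightarrow> 'a \<Rightarrow> 'a set" where
  "nbr_A F w = {a\<in>A. F a w}"

definition nbr_B :: "('a \<Rightarrow> 'a \<Rightarrow> bool) \<Rightarrow> 'a \<Rightarrow> 'a set" where
  "nbr_B F u = {b\<in>B. F u b}"

text \<open>A vertex outside A \<union> B is tame towards A if it sees A like a vertex of B does (all of A0
  or nothing), and wild otherwise.\<close>
definition wild_A :: "('a \<Rightarrow> 'a \<Rightarrow> bool) \<Rightarrow> 'a \<Rightarrow> bool" where
  "wild_A F w \<longleftrightarrow> nbr_A F w \<noteq> {} \<and> nbr_A F w \<noteq> A0"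

definition wild_B :: "('a \<Rightarrow> 'a \<Rightarrow> bool) \<Rightarrow> 'a \<Rightarrow> bool" where
  "wild_B F u \<longleftrightarrow> nbr_B F u \<noteq> {} \<and> nbr_B F u \<noteq> B0"

abbreviation adj_A0 :: "('a \<Rightarrow> 'a \<Rightarrow> bool) \<Rightarrow> 'a \<Rightarrow> bool" where
  "adj_A0 F w \<equiv> nbr_A F w = A0"

abbreviation adj_B0 :: "('a \<Rightarrow> 'a \<Rightarrow> bool) \<Rightarrow> 'a \<Rightarrow> bool" where
  "adj_B0 F u \<equiv> nbr_B F u = B0"

definition linked :: "('a \<Rightarrow> 'a \<Rightarrow> bool) \<Rightarrow> 'a \<Rightarrow> 'a \<Rightarrow> bool" where
  "linked F u w \<longleftrightarrow> 2 \<le> cut_rank F (A \<union> {u}) (B \<union> {w})"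

lemma cut_pattern_cong:
  "cut_pattern F \<Longrightarrow> \<forall>x\<in>A \<union> B. \<forall>y\<in>A \<union> B. F' x y = F x y \<Longrightarrow> cut_pattern F'"
  unfolding cut_pattern_def by auto

lemma cut_rank_sides:
  assumes "cut_pattern F"
  shows "cut_rank F A B = 1"
proof -
  obtain a b where "a \<in> A0" "b \<in> B0" using A0_ne B0_ne by blast
  then have "1 \<le> cut_rank F A B"
    using cut_rank_pos[OF finite_A, where x = a and Y = B and y = b and E = F] A0_sub B0_sub assms
    unfolding cut_pattern_def by blast
  moreover have "\<not> two_distinct_nonzero_rows F A B"
    using assms unfolding two_distinct_nonzero_rows_def cut_pattern_def by auto
  then have "\<not> 2 \<le> cut_rank F A B" using cut_rank_ge_2_iff finite_A by blast
  ultimately show ?thesis by simp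
qed

lemma cut_rank_extend_B_iff:
  assumes "cut_pattern F" "w \<notin> B"
  shows "2 \<le> cut_rank F A (B \<union> {w}) \<longleftrightarrow> wild_A F w"
proof -
  have "two_distinct_nonzero_rows F A (B \<union> {w}) \<longleftrightarrow> wild_A F w"
  proof
    assume t: "two_distinct_nonzero_rows F A (B \<union> {w})"
    show "wild_A F w"
    proof (rule ccontr)
      assume nw: "\<not> wild_A F w"
      then have c: "nbr_A F w = {} \<or> nbr_A F w = A0" unfolding wild_A_def by blast
      from t obtain x x' where xx: "x \<in> A" "x' \<in> A" "\<exists>y\<in>B \<union> {w}. F x y" "\<exists>y\<in>B \<union> {w}. F x' y"
        "\<exists>y\<in>B \<union> {w}. F x y \<noteq> F x' y" unfolding two_distinct_nonzero_rows_def by blast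
      have fx: "\<And>z. z \<in> A \<Longrightarrow> F z w \<longleftrightarrow> z \<in> nbr_A F w" unfolding nbr_A_def by auto
      have "x \<in> A0" using xx(1,3) c assms(1) fx A0_sub unfolding cut_pattern_def by auto
      moreover have "x' \<in> A0" using xx(2,4) c assms(1) fx A0_sub unfolding cut_pattern_def by auto
      ultimately show False using xx(1,2,5) c assms(1) fx unfolding cut_pattern_def by auto
    qed
  next
    assume w: "wild_A F w"
    obtain b where b: "b \<in> B0" using B0_ne by blast
    have NAsub: "nbr_A F w \<subseteq> A" unfolding nbr_A_def by auto
    show "two_distinct_nonzero_rows F A (B \<union> {w})"
    proof (cases "A0 \<subseteq> nbr_A F w")
      case True
      then obtain x' where x': "x' \<in> nbr_A F w" "x' \<notin> A0" using w unfolding wild_A_def by blast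
      obtain a where a: "a \<in> A0" using A0_ne by blast
      have "a \<in> A" "x' \<in> A" using a x' A0_sub NAsub by auto
      moreover have "F a b" "F x' w" "\<not> F x' b" using a b x' True assms(1) B0_sub A0_sub NAsub
        unfolding cut_pattern_def nbr_A_def by auto
      ultimately show ?thesis unfolding two_distinct_nonzero_rows_def using b B0_sub by blast
    next
      case False
      then obtain a where a: "a \<in> A0" "a \<notin> nbr_A F w" by blast
      obtain x' where x': "x' \<in> nbr_A F w" using w unfolding wild_A_def by blast
      have aA: "a \<in> A" "x' \<in> A" using a x' A0_sub NAsub by auto
      have Fab: "F a b" "\<not> F a w" "F x' w" using a b x' aA assms(1) B0_sub unfolding cut_pattern_def nbr_A_def by auto
      show ?thesis unfolding two_distinct_nonzero_rows_def
        using aA Fab b B0_sub by (intro bexI[of _ a] bexI[of _ x']) auto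
    qed
  qed
  moreover have "finite A" by (rule finite_A)
  ultimately show ?thesis using cut_rank_ge_2_iff by blast
qed

lemma rank_one_rows:
  assumes "cut_pattern F" "x \<in> A"
  shows "(\<forall>y\<in>B. \<not> F x y) \<or> (\<forall>y\<in>B. F x y = (y \<in> B0))"
  using assms unfolding cut_pattern_def by blast

lemma cut_rank_extend_A_iff:
  assumes s: "cut_pattern F"
  shows "2 \<le> cut_rank F (A \<union> {u}) B \<longleftrightarrow> wild_B F u"
proof -
  obtain a b where "a \<in> A0" "b \<in> B0" using A0_ne B0_ne by blast
  then have "two_distinct_nonzero_rows F (insert u A) B \<longleftrightarrow>
      (\<exists>y\<in>B. F u y) \<and> (\<exists>y\<in>B. F u y \<noteq> (y \<in> B0))"
    using s A0_sub B0_sub rank_one_rows[OF s]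
    by (intro two_distinct_nonzero_rows_insert[where x\<^sub>0 = a]) (auto simp: cut_pattern_def)
  also have "\<dots> \<longleftrightarrow> wild_B F u"
    unfolding wild_B_def nbr_B_def using B0_sub by auto
  finally show ?thesis using cut_rank_ge_2_iff[of "insert u A"] finite_A by simp
qed

lemma linked_iff:
  assumes s: "cut_pattern F" and w_out_AB: "w \<notin> A \<union> B"
    and w_tame: "\<not> wild_A F w" and u_tame: "\<not> wild_B F u"
  shows "linked F u w \<longleftrightarrow> F u w \<noteq> (adj_B0 F u \<and> adj_A0 F w)"
proof -
  define al where "al = adj_A0 F w"
  define be where "be = adj_B0 F u"
  let ?r = "\<lambda>y. y \<in> B0 \<or> (y = w \<and> al)"
  have w_nbrs: "F a w \<longleftrightarrow> al \<and> a \<in> A0" if "a \<in> A" for a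
    using w_tame that A0_sub unfolding al_def wild_A_def nbr_A_def by auto
  have u_nbrs: "F u b \<longleftrightarrow> be \<and> b \<in> B0" if "b \<in> B" for b
    using u_tame that B0_sub unfolding be_def wild_B_def nbr_B_def by auto
  have w_out: "w \<notin> B" "w \<notin> B0" using w_out_AB B0_sub by auto
  have rows: "(\<forall>y\<in>B \<union> {w}. \<not> F a y) \<or> (\<forall>y\<in>B \<union> {w}. F a y = ?r y)" if "a \<in> A" for a
    using s that w_nbrs[OF that] w_out unfolding cut_pattern_def by auto
  obtain a b where ab: "a \<in> A0" "b \<in> B0" using A0_ne B0_ne by blast
  then have "two_distinct_nonzero_rows F (insert u A) (B \<union> {w}) \<longleftrightarrow>
      (\<exists>y\<in>B \<union> {w}. F u y) \<and> (\<exists>y\<in>B \<union> {w}. F u y \<noteq> ?r y)"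
    using s A0_sub B0_sub rows w_nbrs w_out
    by (intro two_distinct_nonzero_rows_insert[where x\<^sub>0 = a]) (auto simp: cut_pattern_def)
  also have "\<dots> \<longleftrightarrow> F u w \<noteq> (be \<and> al)"
    using u_nbrs ab B0_sub w_out by auto
  finally show ?thesis
    unfolding linked_def al_def be_def using cut_rank_ge_2_iff[of "insert u A"] finite_A by simp
qed

lemma blocking_cond_iff_walk:
  assumes "cut_pattern F" "set vs \<inter> (A \<union> B) = {}"
  shows "blocking_cond F A B vs \<longleftrightarrow> walk (wild_A F) (wild_B F) (linked F) vs"
proof -
  have "blocking_cond F A B vs \<longleftrightarrow>
      walk (\<lambda>v. 2 \<le> cut_rank F A (B \<union> {v})) (\<lambda>v. 2 \<le> cut_rank F (A \<union> {v}) B) (linked F) vs"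
    unfolding blocking_cond_def walk_def linked_def cut_rank_sides[OF assms(1)]
    by (auto simp: numeral_2_eq_2 Suc_le_eq)
  also have "\<dots> \<longleftrightarrow> walk (wild_A F) (wild_B F) (linked F) vs"
    using assms cut_rank_extend_B_iff[OF assms(1)] cut_rank_extend_A_iff[OF assms(1)]
    by (intro walk_cong) auto
  finally show ?thesis .
qed

text \<open>T stands for the vertices from which a B-wild vertex can be reached; when there is no walk
  they satisfy the hypotheses below, and then (A \<union> (S - T), B \<union> T) is a split.\<close>
lemma edges_across_unreachable:
  assumes s: "cut_pattern E" and S: "S = V - (A \<union> B)" and TS: "T \<subseteq> S"
    and T_tame: "\<And>w. w \<in> T \<Longrightarrow> \<not> wild_A E w"
    and U_tame: "\<And>u. u \<in> S - T \<Longrightarrow> \<not> wild_B E u"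
    and U_T_unlinked: "\<And>u w. u \<in> S - T \<Longrightarrow> w \<in> T \<Longrightarrow> \<not> linked E u w"
    and x: "x \<in> A \<union> (S - T)" and y: "y \<in> B \<union> T"
  shows "E x y \<longleftrightarrow> x \<in> A0 \<union> {u\<in>S - T. adj_B0 E u} \<and> y \<in> B0 \<union> {w\<in>T. adj_A0 E w}"
proof -
  have SAB: "S \<inter> A = {}" "S \<inter> B = {}" unfolding S by auto
  show ?thesis
  proof (cases "x \<in> A")
    case xA: True
    show ?thesis
    proof (cases "y \<in> B")
      case True
      then show ?thesis using xA s SAB TS unfolding cut_pattern_def by auto
    next
      case False
      then have yT: "y \<in> T" using y by auto
      have "nbr_A E y = {} \<or> adj_A0 E y" using T_tame[OF yT] unfolding wild_A_def by blast
      moreover have "E x y \<longleftrightarrow> x \<in> nbr_A E y" unfolding nbr_A_def using xA by auto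
      ultimately show ?thesis using xA yT SAB TS B0_sub by auto
    qed
  next
    case False
    then have xU: "x \<in> S - T" using x by auto
    show ?thesis
    proof (cases "y \<in> B")
      case True
      have "nbr_B E x = {} \<or> adj_B0 E x" using U_tame[OF xU] unfolding wild_B_def by blast
      moreover have "E x y \<longleftrightarrow> y \<in> nbr_B E x" unfolding nbr_B_def using True by auto
      ultimately show ?thesis using xU True SAB TS A0_sub by auto
    next
      case False
      then have yT: "y \<in> T" using y by auto
      have "x \<notin> A \<union> B" "y \<notin> A \<union> B" using xU yT TS unfolding S by auto
      then have "linked E x y \<longleftrightarrow> E x y \<noteq> (adj_B0 E x \<and> adj_A0 E y)"
        using linked_iff[OF s] T_tame[OF yT] U_tame[OF xU] by blast
      then show ?thesis using U_T_unlinked[OF xU yT] xU yT SAB TS A0_sub B0_sub by auto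
    qed
  qed
qed

lemma split_from_unreachable:
  assumes g: "graph V E" and s: "cut_pattern E" and AV: "A \<subseteq> V" and BV: "B \<subseteq> V"
    and cA2: "card A \<ge> 2" and cB2: "card B \<ge> 2"
    and S: "S = V - (A \<union> B)" and TS: "T \<subseteq> S"
    and T_tame: "\<And>w. w \<in> T \<Longrightarrow> \<not> wild_A E w"
    and U_tame: "\<And>u. u \<in> S - T \<Longrightarrow> \<not> wild_B E u"
    and U_T_unlinked: "\<And>u w. u \<in> S - T \<Longrightarrow> w \<in> T \<Longrightarrow> \<not> linked E u w"
  shows "is_split V E (A \<union> (S - T)) (B \<union> T)"
proof -
  define X where "X = A \<union> (S - T)"
  define Y where "Y = B \<union> T"
  define X' where "X' = A0 \<union> {u\<in>S - T. adj_B0 E u}"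
  define Y' where "Y' = B0 \<union> {w\<in>T. adj_A0 E w}"
  have "\<forall>x\<in>X. \<forall>y\<in>Y. E x y \<longleftrightarrow> x \<in> X' \<and> y \<in> Y'"
    unfolding X_def Y_def X'_def Y'_def
    using edges_across_unreachable[OF s S TS T_tame U_tame U_T_unlinked] by blast
  moreover have finV: "finite V" using g unfolding graph_def by auto
  have XV: "X \<subseteq> V" "Y \<subseteq> V" unfolding X_def Y_def using AV BV TS S by auto
  have "card A \<le> card X" using finV XV by (intro card_mono) (auto simp: X_def intro: finite_subset)
  moreover have "card B \<le> card Y" using finV XV by (intro card_mono) (auto simp: Y_def intro: finite_subset)
  moreover have "X \<inter> Y = {}" "X \<union> Y = V"
    unfolding X_def Y_def using disjoint_sides AV BV TS S by auto
  moreover have "X' \<subseteq> X" "Y' \<subseteq> Y"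
    unfolding X_def Y_def X'_def Y'_def using A0_sub B0_sub by auto
  ultimately show ?thesis
    unfolding is_split_def X_def[symmetric] Y_def[symmetric] using cA2 cB2
    by (intro conjI exI[of _ X'] exI[of _ Y']) auto
qed

lemma prime_graph_has_walk:
  assumes g: "graph V E" and pr: "prime_graph V E" and AV: "A \<subseteq> V" and BV: "B \<subseteq> V"
    and s: "cut_pattern E" and cA2: "card A \<ge> 2" and cB2: "card B \<ge> 2"
  obtains L where "set L \<subseteq> V - (A \<union> B)" "walk (wild_A E) (wild_B E) (linked E) L"
proof -
  note found = that
  define S where "S = V - (A \<union> B)"
  define T where "T = {v\<in>S. \<exists>L. set L \<subseteq> S \<and> walk (\<lambda>x. x = v) (wild_B E) (linked E) L}"
  show ?thesis
  proof (rule ccontr)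
    assume no_walk: "\<not> thesis"
    have "\<not> wild_A E w" if "w \<in> T" for w
    proof
      assume "wild_A E w"
      moreover obtain L where "set L \<subseteq> S" "walk (\<lambda>x. x = w) (wild_B E) (linked E) L"
        using \<open>w \<in> T\<close> unfolding T_def by blast
      ultimately have "walk (wild_A E) (wild_B E) (linked E) L" unfolding walk_def by auto
      then show False using found no_walk \<open>set L \<subseteq> S\<close> S_def by blast
    qed
    moreover have "\<not> wild_B E u" if "u \<in> S - T" for u
    proof
      assume "wild_B E u"
      then have "walk (\<lambda>x. x = u) (wild_B E) (linked E) [u]" unfolding walk_def by simp
      then show False using that unfolding T_def by auto
    qed
    moreover have "\<not> linked E u w" if "u \<in> S - T" "w \<in> T" for u w
    proof
      assume "linked E u w"
      moreover obtain L where "set L \<subseteq> S" "walk (\<lambda>x. x = w) (wild_B E) (linked E) L"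
        using \<open>w \<in> T\<close> unfolding T_def by blast
      moreover from this have "L!0 = w" unfolding walk_def by simp
      ultimately have "walk (\<lambda>x. x = u) (wild_B E) (linked E) (u # L)"
        by (intro walk_Cons) auto
      then show False using that \<open>set L \<subseteq> S\<close> unfolding T_def by auto
    qed
    ultimately have "is_split V E (A \<union> (S - T)) (B \<union> T)"
      by (intro split_from_unreachable[OF g s AV BV cA2 cB2 S_def]) (auto simp: T_def)
    then show False using pr unfolding prime_graph_def by blast
  qed
qed

end

lemma tame_sym_diff:
  assumes "N \<subseteq> X" "X0 \<subseteq> X" "X0 \<noteq> {}" "C = {} \<or> C = X0"
    and N': "N' = {a\<in>X. (a \<in> N) \<noteq> (a \<in> C \<and> t)}"
  shows "(N' \<noteq> {} \<and> N' \<noteq> X0) = (N \<noteq> {} \<and> N \<noteq> X0)"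
    and "N = {} \<or> N = X0 \<Longrightarrow> (N' = X0) = ((N = X0) \<noteq> (t \<and> C = X0))"
proof -
  have "(N' \<noteq> {} \<and> N' \<noteq> X0) = (N \<noteq> {} \<and> N \<noteq> X0) \<and>
        ((N = {} \<or> N = X0) \<longrightarrow> (N' = X0) = ((N = X0) \<noteq> (t \<and> C = X0)))"
  proof (cases "t \<and> C = X0")
    case False
    then have "N' = N" using assms by auto
    then show ?thesis using False assms(3,4) by auto
  next
    case True
    then have "N' = {a\<in>X. (a \<in> N) \<noteq> (a \<in> X0)}" using N' by auto
    then have "N' = {} \<longleftrightarrow> N = X0" "N' = X0 \<longleftrightarrow> N = {}" using assms(1,2) by auto
    then show ?thesis using True assms(3) by auto
  qed
  then show "(N' \<noteq> {} \<and> N' \<noteq> X0) = (N \<noteq> {} \<and> N \<noteq> X0)"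
    and "N = {} \<or> N = X0 \<Longrightarrow> (N' = X0) = ((N = X0) \<noteq> (t \<and> C = X0))" by auto
qed

section \<open>Patterns of walks\<close>

text \<open>A pattern (al, be, e) describes a sequence of vertices v_0, v_1, \<dots> up to the graph:
  al k and be k say whether v_k is adjacent to A0 and to B0, and e p q whether v_p v_q is an edge.
  pattern_lc i is the effect of local complementation at v_i, and pattern_link p q says that
  v_p, v_q are linked (see linked_iff).\<close>
type_synonym pattern = "(nat \<Rightarrow> bool) \<times> (nat \<Rightarrow> bool) \<times> (nat \<Rightarrow> nat \<Rightarrow> bool)"

definition pattern_lc :: "nat \<Rightarrow> pattern \<Rightarrow> pattern" where
  "pattern_lc i s = (case s of (al, be, e) \<Rightarrow>
     (\<lambda>k. if k = i then al k else al k \<noteq> (e i k \<and> al i),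
      \<lambda>k. if k = i then be k else be k \<noteq> (e i k \<and> be i),
      \<lambda>p q. if p = q then e p q else e p q \<noteq> (e i p \<and> e i q)))"

definition pattern_link :: "pattern \<Rightarrow> nat \<Rightarrow> nat \<Rightarrow> bool" where
  "pattern_link s p q = (case s of (al, be, e) \<Rightarrow> e p q \<noteq> (be p \<and> al q))"

text \<open>The adjacency forced on a shortest walk: consecutive vertices are linked and
  non-consecutive ones are not.\<close>
definition tight_adj :: "(nat \<Rightarrow> bool) \<Rightarrow> (nat \<Rightarrow> bool) \<Rightarrow> nat \<Rightarrow> nat \<Rightarrow> bool" where
  "tight_adj al be p q =
     (if p < q then (if q = Suc p then \<not> (be p \<and> al q) else be p \<and> al q)
      else if q < p then (if p = Suc q then \<not> (be q \<and> al p) else be q \<and> al p) else False)"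

text \<open>Positions p, q are consecutive once the positions i, \<dots>, j - 1 are deleted.\<close>
definition skip_step :: "nat \<Rightarrow> nat \<Rightarrow> nat \<Rightarrow> nat \<Rightarrow> bool" where
  "skip_step i j p q \<longleftrightarrow> (Suc p < i \<and> q = Suc p) \<or> (p = i - 1 \<and> q = j) \<or> (j \<le> p \<and> q = Suc p)"

lemma pattern_link_lc_harmless:
  assumes "1 \<le> i" "\<not> (al i \<and> be i)" "skip_step i (Suc i) p q"
  shows "pattern_link (pattern_lc i (al, be, tight_adj al be)) p q"
  using assms(3) unfolding skip_step_def apply (elim disjE conjE)
  using assms(1,2) by (auto simp: pattern_link_def pattern_lc_def tight_adj_def)

lemma pattern_link_lc_twins_far:
  assumes "1 \<le> i" "Suc i < j" "al i = al j" "be i = be j" "al i \<noteq> be i" "skip_step i (Suc i) p q"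
  shows "pattern_link (pattern_lc j (pattern_lc i (al, be, tight_adj al be))) p q"
  using assms(6) unfolding skip_step_def apply (elim disjE conjE)
  using assms(1-5) by (auto simp: pattern_link_def pattern_lc_def tight_adj_def)

lemma pattern_link_lc_twins_near:
  assumes "1 \<le> i" "al i" "be i" "al (Suc i)" "be (Suc i)" "skip_step i (Suc (Suc i)) p q"
  shows "pattern_link (pattern_lc (Suc i) (pattern_lc i (al, be, tight_adj al be))) p q"
  using assms(6) unfolding skip_step_def apply (elim disjE conjE)
  using assms(1-5) by (auto simp: pattern_link_def pattern_lc_def tight_adj_def)

lemma pattern_link_pivot_far:
  assumes "1 \<le> i" "Suc i < j" "al i" "be i" "al j" "be j" "skip_step i (Suc i) p q"
  shows "pattern_link (pattern_lc i (pattern_lc j (pattern_lc i (al, be, tight_adj al be)))) p q"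
  using assms(7) unfolding skip_step_def apply (elim disjE conjE)
  using assms(1-6) by (auto simp: pattern_link_def pattern_lc_def tight_adj_def)

lemma pattern_link_pivot_near:
  assumes "1 \<le> i" "al i = al (Suc i)" "be i = be (Suc i)" "al i \<noteq> be i"
    "skip_step i (Suc (Suc i)) p q"
  shows "pattern_link (pattern_lc i (pattern_lc (Suc i) (pattern_lc i (al, be, tight_adj al be)))) p q"
  using assms(5) unfolding skip_step_def apply (elim disjE conjE)
  using assms(1-4) by (auto simp: pattern_link_def pattern_lc_def tight_adj_def)

context rank_one_cut
begin

lemma nbr_A_local_comp:
  assumes "graph V F" "v \<notin> A"
  shows "nbr_A (local_comp F c) v = {a\<in>A. (a \<in> nbr_A F v) \<noteq> (a \<in> nbr_A F c \<and> F c v)}"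
  using assms unfolding nbr_A_def local_comp_def graph_def by auto

lemma nbr_B_local_comp:
  assumes "graph V F" "u \<notin> B"
  shows "nbr_B (local_comp F c) u = {b\<in>B. (b \<in> nbr_B F u) \<noteq> (b \<in> nbr_B F c \<and> F c u)}"
  using assms unfolding nbr_B_def local_comp_def graph_def by auto

lemma wild_A_local_comp:
  assumes "graph V F" "v \<notin> A" "\<not> wild_A F c"
  shows "wild_A (local_comp F c) v \<longleftrightarrow> wild_A F v"
  using tame_sym_diff(1)[of "nbr_A F v" A A0 "nbr_A F c", OF _ A0_sub A0_ne _ nbr_A_local_comp[OF assms(1,2)]]
    assms(3) unfolding wild_A_def by (auto simp: nbr_A_def)

lemma adj_A0_local_comp:
  assumes "graph V F" "v \<notin> A" "\<not> wild_A F c" "\<not> wild_A F v"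
  shows "adj_A0 (local_comp F c) v \<longleftrightarrow> adj_A0 F v \<noteq> (F c v \<and> adj_A0 F c)"
  using tame_sym_diff(2)[of "nbr_A F v" A A0 "nbr_A F c", OF _ A0_sub A0_ne _ nbr_A_local_comp[OF assms(1,2)]]
    assms(3,4) unfolding wild_A_def by (auto simp: nbr_A_def)

lemma wild_B_local_comp:
  assumes "graph V F" "u \<notin> B" "\<not> wild_B F c"
  shows "wild_B (local_comp F c) u \<longleftrightarrow> wild_B F u"
  using tame_sym_diff(1)[of "nbr_B F u" B B0 "nbr_B F c", OF _ B0_sub B0_ne _ nbr_B_local_comp[OF assms(1,2)]]
    assms(3) unfolding wild_B_def by (auto simp: nbr_B_def)

lemma adj_B0_local_comp:
  assumes "graph V F" "u \<notin> B" "\<not> wild_B F c" "\<not> wild_B F u"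
  shows "adj_B0 (local_comp F c) u \<longleftrightarrow> adj_B0 F u \<noteq> (F c u \<and> adj_B0 F c)"
  using tame_sym_diff(2)[of "nbr_B F u" B B0 "nbr_B F c", OF _ B0_sub B0_ne _ nbr_B_local_comp[OF assms(1,2)]]
    assms(3,4) unfolding wild_B_def by (auto simp: nbr_B_def)

lemma tame_nbrs:
  assumes "graph V F" "\<not> wild_A F c" "\<not> wild_B F c"
  shows "x \<in> A \<Longrightarrow> F c x \<longleftrightarrow> adj_A0 F c \<and> x \<in> A0"
    and "x \<in> B \<Longrightarrow> F c x \<longleftrightarrow> adj_B0 F c \<and> x \<in> B0"
proof -
  have sym: "\<And>x y. F x y = F y x" using assms(1) unfolding graph_def by blast
  have "nbr_A F c = (if adj_A0 F c then A0 else {})" using assms(2) unfolding wild_A_def by auto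
  then show "x \<in> A \<Longrightarrow> F c x \<longleftrightarrow> adj_A0 F c \<and> x \<in> A0"
    unfolding nbr_A_def using sym A0_sub by (auto split: if_splits)
  have "nbr_B F c = (if adj_B0 F c then B0 else {})" using assms(3) unfolding wild_B_def by auto
  then show "x \<in> B \<Longrightarrow> F c x \<longleftrightarrow> adj_B0 F c \<and> x \<in> B0"
    unfolding nbr_B_def using B0_sub by (auto split: if_splits)
qed

lemma tame_twins:
  assumes "graph V F" "\<not> wild_A F c" "\<not> wild_B F c" "\<not> wild_A F d" "\<not> wild_B F d"
    "adj_A0 F c = adj_A0 F d" "adj_B0 F c = adj_B0 F d"
  shows "\<forall>x\<in>A \<union> B. F c x = F d x"
  using tame_nbrs[OF assms(1-3)] tame_nbrs[OF assms(1,4,5)] assms(6,7) by blast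

definition realises :: "('a \<Rightarrow> 'a \<Rightarrow> bool) \<Rightarrow> (nat \<Rightarrow> 'a) \<Rightarrow> nat \<Rightarrow> pattern \<Rightarrow> bool" where
  "realises F v m s \<longleftrightarrow> (case s of (al, be, e) \<Rightarrow>
     (\<forall>p<m. \<forall>q<m. F (v p) (v q) = e p q) \<and>
     (\<forall>k. 1 \<le> k \<and> k < m \<longrightarrow> \<not> wild_A F (v k) \<and> adj_A0 F (v k) = al k) \<and>
     (\<forall>k. k + 1 < m \<longrightarrow> \<not> wild_B F (v k) \<and> adj_B0 F (v k) = be k) \<and>
     wild_A F (v 0) \<and> wild_B F (v (m - 1)))"

lemma realises_local_comp:
  assumes g: "graph V F" and inj: "inj_on v {..<m}" and out: "\<forall>k<m. v k \<notin> A \<union> B"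
    and i: "1 \<le> i" "i + 1 < m" and r: "realises F v m s"
  shows "realises (local_comp F (v i)) v m (pattern_lc i s)"
proof -
  obtain al be e where s: "s = (al, be, e)" by (cases s) auto
  define c where "c = v i"
  define F' where "F' = local_comp F c"
  have r_e: "\<And>p q. p < m \<Longrightarrow> q < m \<Longrightarrow> F (v p) (v q) = e p q"
    and r_a: "\<And>k. 1 \<le> k \<Longrightarrow> k < m \<Longrightarrow> \<not> wild_A F (v k) \<and> adj_A0 F (v k) = al k"
    and r_b: "\<And>k. k + 1 < m \<Longrightarrow> \<not> wild_B F (v k) \<and> adj_B0 F (v k) = be k"
    and r_0: "wild_A F (v 0)" and r_m: "wild_B F (v (m - 1))"
    using r unfolding realises_def s by auto
  have im: "i < m" using i by simp
  have c_tame: "\<not> wild_A F c" "\<not> wild_B F c" and c_type: "adj_A0 F c = al i" "adj_B0 F c = be i"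
    using r_a[OF i(1) im] r_b[OF i(2)] unfolding c_def by auto
  have Fc: "\<And>k. k < m \<Longrightarrow> F c (v k) = e i k" using r_e im unfolding c_def by blast
  have Fcc: "\<not> F c (v i)" using g unfolding graph_def c_def by blast
  have "F' (v p) (v q) = (if p = q then e p q else e p q \<noteq> (e i p \<and> e i q))"
    if "p < m" "q < m" for p q
  proof -
    have "v p = v q \<longleftrightarrow> p = q" using inj that unfolding inj_on_def by auto
    then show ?thesis unfolding F'_def local_comp_def using Fc that r_e[OF that] by auto
  qed
  moreover have "\<not> wild_A F' (v k) \<and> adj_A0 F' (v k) = (if k = i then al k else al k \<noteq> (e i k \<and> al i))"
    if "1 \<le> k" "k < m" for k
    using wild_A_local_comp[OF g _ c_tame(1)] adj_A0_local_comp[OF g _ c_tame(1)] r_a[OF that]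
      out c_type Fc[OF that(2)] Fcc that unfolding F'_def by (auto simp: c_def)
  moreover have "\<not> wild_B F' (v k) \<and> adj_B0 F' (v k) = (if k = i then be k else be k \<noteq> (e i k \<and> be i))"
    if "k + 1 < m" for k
    using wild_B_local_comp[OF g _ c_tame(2)] adj_B0_local_comp[OF g _ c_tame(2)] r_b[OF that]
      out c_type Fc[of k] Fcc that unfolding F'_def by (auto simp: c_def)
  moreover have "wild_A F' (v 0)" "wild_B F' (v (m - 1))"
    using wild_A_local_comp[OF g _ c_tame(1)] wild_B_local_comp[OF g _ c_tame(2)] r_0 r_m out im
    unfolding F'_def by auto
  ultimately show ?thesis
    unfolding realises_def s pattern_lc_def F'_def[symmetric] c_def[symmetric] by simp
qed

lemma realises_linked_iff:
  assumes r: "realises F v m s" and s: "cut_pattern F" and inj: "inj_on v {..<m}"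
    and out: "\<forall>k<m. v k \<notin> A \<union> B" and pq: "p < q" "q < m"
  shows "linked F (v p) (v q) \<longleftrightarrow> pattern_link s p q"
proof -
  obtain al be e where s3: "s = (al, be, e)" by (cases s) auto
  have r_e: "F (v p) (v q) = e p q" and r_a: "\<not> wild_A F (v q) \<and> adj_A0 F (v q) = al q"
    and r_b: "\<not> wild_B F (v p) \<and> adj_B0 F (v p) = be p"
    using r pq unfolding realises_def s3 by auto
  have "v p \<noteq> v q" using inj pq unfolding inj_on_def by auto
  then have "linked F (v p) (v q) \<longleftrightarrow> F (v p) (v q) \<noteq> (adj_B0 F (v p) \<and> adj_A0 F (v q))"
    using linked_iff[OF s] out pq r_a r_b by auto
  then show ?thesis using r_e r_a r_b unfolding pattern_link_def s3 by auto
qed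

definition shortest_walk :: "'a set \<Rightarrow> ('a \<Rightarrow> 'a \<Rightarrow> bool) \<Rightarrow> 'a list \<Rightarrow> bool" where
  "shortest_walk V F vs \<longleftrightarrow> set vs \<subseteq> V - (A \<union> B) \<and> walk (wild_A F) (wild_B F) (linked F) vs \<and>
     (\<forall>L. set L \<subseteq> V - (A \<union> B) \<longrightarrow> walk (wild_A F) (wild_B F) (linked F) L \<longrightarrow> length vs \<le> length L)"

definition equiv_walk :: "'a set \<Rightarrow> ('a \<Rightarrow> 'a \<Rightarrow> bool) \<Rightarrow> ('a \<Rightarrow> 'a \<Rightarrow> bool) \<Rightarrow> 'a list \<Rightarrow> bool" where
  "equiv_walk V F F' L \<longleftrightarrow> locally_equiv V F F' \<and> (\<forall>x\<in>A \<union> B. \<forall>y\<in>A \<union> B. F' x y = F x y) \<and>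
     set L \<subseteq> V - (A \<union> B) \<and> walk (wild_A F') (wild_B F') (linked F') L"

lemma equiv_walk_trans:
  "equiv_walk V E F L \<Longrightarrow> equiv_walk V F F' L' \<Longrightarrow> equiv_walk V E F' L'"
  unfolding equiv_walk_def by (auto intro: locally_equiv_trans)

lemma shortest_walk_no_shortcut:
  assumes "shortest_walk V F vs" "walk (wild_A F) (wild_B F) (linked F) (take i vs @ drop j vs)"
  shows "length vs \<le> i + (length vs - j)"
proof -
  have "set (take i vs @ drop j vs) \<subseteq> V - (A \<union> B)"
    using assms(1) set_take_subset set_drop_subset unfolding shortest_walk_def by fastforce
  then have "length vs \<le> length (take i vs @ drop j vs)"
    using assms unfolding shortest_walk_def by blast
  then show ?thesis by simp
qed

lemma shortest_walk_tight:
  assumes sw: "shortest_walk V F vs"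
  shows "inj_on ((!) vs) {..<length vs}"
    and "\<forall>k. 1 \<le> k \<and> k < length vs \<longrightarrow> \<not> wild_A F (vs!k)"
    and "\<forall>k. k + 1 < length vs \<longrightarrow> \<not> wild_B F (vs!k)"
    and "\<forall>p q. p + 1 < q \<and> q < length vs \<longrightarrow> \<not> linked F (vs!p) (vs!q)"
proof -
  let ?m = "length vs"
  note short = shortest_walk_no_shortcut[OF sw]
  have ne: "vs \<noteq> []" and w0: "wild_A F (vs!0)" and wl: "wild_B F (last vs)"
    and cons: "\<And>i. i + 1 < ?m \<Longrightarrow> linked F (vs!i) (vs!(i+1))"
    using sw unfolding shortest_walk_def walk_def by auto
  have lastv: "last vs = vs ! (?m - 1)" using ne by (simp add: last_conv_nth)
  show "inj_on ((!) vs) {..<?m}"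
  proof (rule inj_onI, rule ccontr)
    have no_repeat: False if ij: "i < j" "j < ?m" "vs!i = vs!j" for i j
    proof -
      have "0 < i \<Longrightarrow> linked F (vs!(i-1)) (vs!j)" using cons[of "i-1"] ij by (cases i) auto
      then have "walk (wild_A F) (wild_B F) (linked F) (take i vs @ drop j vs)"
        by (intro walk_take_append_drop) (use ij w0 wl lastv cons in \<open>auto\<close>)
      then show False using short ij by fastforce
    qed
    fix x y assume "x \<in> {..<?m}" "y \<in> {..<?m}" "vs!x = vs!y" "x \<noteq> y"
    then show False using no_repeat[of x y] no_repeat[of y x] by (cases "x < y") auto
  qed
  show "\<forall>k. 1 \<le> k \<and> k < ?m \<longrightarrow> \<not> wild_A F (vs!k)"
  proof (intro allI impI notI)
    fix k assume k: "1 \<le> k \<and> k < ?m" and wk: "wild_A F (vs!k)"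
    have "walk (wild_A F) (wild_B F) (linked F) (take 0 vs @ drop k vs)"
      by (intro walk_take_append_drop) (use k wk wl lastv cons in \<open>auto\<close>)
    then show False using short k by fastforce
  qed
  show "\<forall>k. k + 1 < ?m \<longrightarrow> \<not> wild_B F (vs!k)"
  proof (intro allI impI notI)
    fix k assume k: "k + 1 < ?m" and wk: "wild_B F (vs!k)"
    have "walk (wild_A F) (wild_B F) (linked F) (take (k+1) vs @ drop ?m vs)"
      by (intro walk_take_append_drop) (use k wk w0 cons in \<open>auto\<close>)
    then show False using short k by fastforce
  qed
  show "\<forall>p q. p + 1 < q \<and> q < ?m \<longrightarrow> \<not> linked F (vs!p) (vs!q)"
  proof (intro allI impI notI)
    fix p q assume pq: "p + 1 < q \<and> q < ?m" and l: "linked F (vs!p) (vs!q)"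
    have "walk (wild_A F) (wild_B F) (linked F) (take (p+1) vs @ drop q vs)"
      by (intro walk_take_append_drop) (use pq l w0 wl lastv cons in \<open>auto\<close>)
    then show False using short pq by fastforce
  qed
qed

definition walk_pattern :: "('a \<Rightarrow> 'a \<Rightarrow> bool) \<Rightarrow> 'a list \<Rightarrow> pattern" where
  "walk_pattern F vs = (\<lambda>k. adj_A0 F (vs!k), \<lambda>k. adj_B0 F (vs!k),
     tight_adj (\<lambda>k. adj_A0 F (vs!k)) (\<lambda>k. adj_B0 F (vs!k)))"

lemma shortest_walk_realises:
  assumes g: "graph V F" and s: "cut_pattern F" and sw: "shortest_walk V F vs"
  shows "realises F ((!) vs) (length vs) (walk_pattern F vs)"
proof -
  let ?m = "length vs"
  define al where "al = (\<lambda>k. adj_A0 F (vs!k))"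
  define be where "be = (\<lambda>k. adj_B0 F (vs!k))"
  note tight = shortest_walk_tight[OF sw]
  have sym: "\<And>x y. F x y = F y x" and irr: "\<And>x. \<not> F x x" using g unfolding graph_def by blast+
  have out: "\<forall>k<?m. vs!k \<notin> A \<union> B" using sw nth_mem unfolding shortest_walk_def by blast
  have ne: "vs \<noteq> []" and w0: "wild_A F (vs!0)" and wl: "wild_B F (last vs)"
    and cons: "\<And>i. i + 1 < ?m \<Longrightarrow> linked F (vs!i) (vs!(i+1))"
    using sw unfolding shortest_walk_def walk_def by auto
  have lt: "F (vs!p) (vs!q) = tight_adj al be p q" if pq: "p < q" "q < ?m" for p q
  proof -
    have "vs!p \<noteq> vs!q" using tight(1) pq unfolding inj_on_def by auto
    then have "linked F (vs!p) (vs!q) \<longleftrightarrow> F (vs!p) (vs!q) \<noteq> (be p \<and> al q)"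
      unfolding al_def be_def using linked_iff[OF s] out pq tight(2,3) by auto
    then show ?thesis using cons[of p] tight(4) pq unfolding tight_adj_def by (cases "q = Suc p") auto
  qed
  have "F (vs!p) (vs!q) = tight_adj al be p q" if "p < ?m" "q < ?m" for p q
  proof (cases p q rule: linorder_cases)
    case less then show ?thesis using lt that by simp
  next
    case equal then show ?thesis using irr unfolding tight_adj_def by simp
  next
    case greater
    then have "F (vs!q) (vs!p) = tight_adj al be q p" using lt that by simp
    then show ?thesis using greater sym unfolding tight_adj_def by auto
  qed
  then show ?thesis
    unfolding realises_def walk_pattern_def al_def[symmetric] be_def[symmetric]
    using tight(2,3) w0 wl ne by (auto simp: al_def be_def last_conv_nth)
qed

lemma shortcut_walk:
  assumes s: "cut_pattern F" and sw: "shortest_walk V F vs"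
    and le: "locally_equiv V F F2" and ag: "\<forall>x\<in>A \<union> B. \<forall>y\<in>A \<union> B. F2 x y = F x y"
    and r: "realises F2 ((!) vs) (length vs) s2"
    and ij: "1 \<le> i" "i < j" "j < length vs"
    and lnk: "\<And>p q. skip_step i j p q \<Longrightarrow> pattern_link s2 p q"
  shows "\<exists>F2 L2. equiv_walk V F F2 L2 \<and> length L2 < length vs"
proof -
  let ?m = "length vs"
  have s2: "cut_pattern F2" using cut_pattern_cong[OF s ag] .
  have out: "\<forall>k<?m. vs!k \<notin> A \<union> B" using sw nth_mem unfolding shortest_walk_def by blast
  obtain al be e where s3: "s2 = (al, be, e)" by (cases s2) auto
  have w0: "wild_A F2 (vs!0)" and wm: "wild_B F2 (vs!(?m - 1))" using r unfolding realises_def s3 by auto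
  have L: "\<And>p q. p < q \<Longrightarrow> q < ?m \<Longrightarrow> skip_step i j p q \<Longrightarrow> linked F2 (vs!p) (vs!q)"
    using realises_linked_iff[OF r s2 shortest_walk_tight(1)[OF sw] out] lnk by blast
  have "walk (wild_A F2) (wild_B F2) (linked F2) (take i vs @ drop j vs)"
  proof (rule walk_take_append_drop)
    show "\<And>k. k + 1 < i \<Longrightarrow> linked F2 (vs!k) (vs!(k+1))"
      using L ij unfolding skip_step_def by auto
    show "\<And>k. j \<le> k \<Longrightarrow> k + 1 < ?m \<Longrightarrow> linked F2 (vs!k) (vs!(k+1))"
      using L ij unfolding skip_step_def by auto
    show "0 < i \<Longrightarrow> j < ?m \<Longrightarrow> linked F2 (vs!(i-1)) (vs!j)"
      using L ij unfolding skip_step_def by auto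
  qed (use ij w0 wm in auto)
  moreover have "set (take i vs @ drop j vs) \<subseteq> V - (A \<union> B)"
    using sw set_take_subset set_drop_subset unfolding shortest_walk_def by fastforce
  moreover have "length (take i vs @ drop j vs) < ?m" using ij by simp
  ultimately show ?thesis using le ag unfolding equiv_walk_def by blast
qed

section \<open>Shortening a shortest walk\<close>

lemma shortest_walk_nth:
  "shortest_walk V F vs \<Longrightarrow> k < length vs \<Longrightarrow> vs!k \<in> V \<and> vs!k \<notin> A \<union> B"
  unfolding shortest_walk_def using nth_mem by blast

lemma shortest_walk_realises_lc:
  assumes "graph V F'" "shortest_walk V F vs" "1 \<le> i" "i + 1 < length vs"
    "realises F' ((!) vs) (length vs) s"
  shows "realises (local_comp F' (vs!i)) ((!) vs) (length vs) (pattern_lc i s)"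
  using realises_local_comp[OF assms(1) shortest_walk_tight(1)[OF assms(2)] _ assms(3-5)]
    shortest_walk_nth[OF assms(2)] by blast

text \<open>Local complementation at a tame vertex of harmless type fixes G[A \<union> B], because the
  vertex has at most one neighbour in A \<union> B.\<close>
definition harmless_type :: "bool \<Rightarrow> bool \<Rightarrow> bool" where
  "harmless_type al be \<longleftrightarrow> (\<not> al \<and> \<not> be) \<or> (card A0 = 1 \<and> al \<and> \<not> be) \<or> (card B0 = 1 \<and> \<not> al \<and> be)"

lemma shortcut_harmless:
  assumes g: "graph V F" and s: "cut_pattern F" and sw: "shortest_walk V F vs"
    and i: "1 \<le> i" "i + 1 < length vs" and h: "harmless_type (adj_A0 F (vs!i)) (adj_B0 F (vs!i))"
  shows "\<exists>F2 L2. equiv_walk V F F2 L2 \<and> length L2 < length vs"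
proof -
  define c where "c = vs!i"
  have cV: "c \<in> V" using shortest_walk_nth[OF sw, of i] i unfolding c_def by simp
  have c_tame: "\<not> wild_A F c" "\<not> wild_B F c"
    using shortest_walk_tight(2,3)[OF sw] i unfolding c_def by auto
  have "\<forall>x\<in>A \<union> B. \<forall>y\<in>A \<union> B. F c x \<and> F c y \<longrightarrow> x = y"
  proof (intro ballI impI)
    fix x y assume "x \<in> A \<union> B" "y \<in> A \<union> B" "F c x \<and> F c y"
    then have "x \<in> A0 \<and> y \<in> A0 \<and> card A0 = 1 \<or> x \<in> B0 \<and> y \<in> B0 \<and> card B0 = 1"
      using h tame_nbrs[OF g c_tame] unfolding harmless_type_def c_def by auto
    then show "x = y" by (metis card_1_singletonE singletonD)
  qed
  then have "\<forall>x\<in>A \<union> B. \<forall>y\<in>A \<union> B. local_comp F c x y = F x y"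
    by (rule local_comp_agrees_on)
  moreover have "realises (local_comp F c) ((!) vs) (length vs) (pattern_lc i (walk_pattern F vs))"
    unfolding c_def using shortest_walk_realises_lc[OF g sw i shortest_walk_realises[OF g s sw]] .
  ultimately show ?thesis
  proof (rule shortcut_walk[OF s sw locally_equiv_local_comp[OF cV]])
    show "1 \<le> i" "i < Suc i" "Suc i < length vs" using i by auto
    show "pattern_link (pattern_lc i (walk_pattern F vs)) p q" if "skip_step i (Suc i) p q" for p q
      unfolding walk_pattern_def
      by (rule pattern_link_lc_harmless[OF i(1) _ that]) (use h in \<open>auto simp: harmless_type_def\<close>)
  qed
qed

lemma shortest_walk_twins:
  assumes g: "graph V F" and sw: "shortest_walk V F vs"
    and ij: "1 \<le> i" "i < j" "j + 1 < length vs"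
    and same: "adj_A0 F (vs!i) = adj_A0 F (vs!j)" "adj_B0 F (vs!i) = adj_B0 F (vs!j)"
  shows "vs!i \<in> V" "vs!i \<notin> A \<union> B" "vs!j \<in> V" "vs!j \<notin> A \<union> B"
    and "\<forall>x\<in>A \<union> B. F (vs!i) x = F (vs!j) x"
proof -
  show "vs!i \<in> V" "vs!i \<notin> A \<union> B" "vs!j \<in> V" "vs!j \<notin> A \<union> B"
    using shortest_walk_nth[OF sw, of i] shortest_walk_nth[OF sw, of j] ij by auto
  have "\<not> wild_A F (vs!i)" "\<not> wild_B F (vs!i)" "\<not> wild_A F (vs!j)" "\<not> wild_B F (vs!j)"
    using shortest_walk_tight(2,3)[OF sw] ij by auto
  from tame_twins[OF g this same] show "\<forall>x\<in>A \<union> B. F (vs!i) x = F (vs!j) x" .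
qed

lemma twins_local_comp:
  assumes g: "graph V F" and s: "cut_pattern F" and sw: "shortest_walk V F vs"
    and ij: "1 \<le> i" "i < j" "j + 1 < length vs"
    and same: "adj_A0 F (vs!i) = adj_A0 F (vs!j)" "adj_B0 F (vs!i) = adj_B0 F (vs!j)"
    and nadj: "\<not> F (vs!i) (vs!j)"
  shows "locally_equiv V F (local_comp (local_comp F (vs!i)) (vs!j))"
    and "\<forall>x\<in>A \<union> B. \<forall>y\<in>A \<union> B. local_comp (local_comp F (vs!i)) (vs!j) x y = F x y"
    and "realises (local_comp (local_comp F (vs!i)) (vs!j)) ((!) vs) (length vs)
           (pattern_lc j (pattern_lc i (walk_pattern F vs)))"
proof -
  note twins = shortest_walk_twins[OF g sw ij same]
  have i1: "i + 1 < length vs" and j1: "1 \<le> j" using ij by auto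
  show "locally_equiv V F (local_comp (local_comp F (vs!i)) (vs!j))"
    by (rule locally_equiv.step[OF locally_equiv_local_comp[OF twins(1)] twins(3)])
  show "\<forall>x\<in>A \<union> B. \<forall>y\<in>A \<union> B. local_comp (local_comp F (vs!i)) (vs!j) x y = F x y"
    by (rule local_comp_twins_agrees_on[OF nadj twins(2,4,5)])
  have "realises (local_comp F (vs!i)) ((!) vs) (length vs) (pattern_lc i (walk_pattern F vs))"
    by (rule shortest_walk_realises_lc[OF g sw ij(1) i1 shortest_walk_realises[OF g s sw]])
  then show "realises (local_comp (local_comp F (vs!i)) (vs!j)) ((!) vs) (length vs)
      (pattern_lc j (pattern_lc i (walk_pattern F vs)))"
    by (rule shortest_walk_realises_lc[OF graph_local_comp[OF g twins(1)] sw j1 ij(3)])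
qed

lemma twins_pivot:
  assumes g: "graph V F" and s: "cut_pattern F" and sw: "shortest_walk V F vs"
    and ij: "1 \<le> i" "i < j" "j + 1 < length vs"
    and same: "adj_A0 F (vs!i) = adj_A0 F (vs!j)" "adj_B0 F (vs!i) = adj_B0 F (vs!j)"
    and adj: "F (vs!i) (vs!j)"
  shows "locally_equiv V F (local_comp (local_comp (local_comp F (vs!i)) (vs!j)) (vs!i))"
    and "\<forall>x\<in>A \<union> B. \<forall>y\<in>A \<union> B.
           local_comp (local_comp (local_comp F (vs!i)) (vs!j)) (vs!i) x y = F x y"
    and "realises (local_comp (local_comp (local_comp F (vs!i)) (vs!j)) (vs!i)) ((!) vs) (length vs)
           (pattern_lc i (pattern_lc j (pattern_lc i (walk_pattern F vs))))"
proof -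
  note twins = shortest_walk_twins[OF g sw ij same]
  have i1: "i + 1 < length vs" and j1: "1 \<le> j" using ij by auto
  have g1: "graph V (local_comp F (vs!i))" by (rule graph_local_comp[OF g twins(1)])
  have g2: "graph V (local_comp (local_comp F (vs!i)) (vs!j))" by (rule graph_local_comp[OF g1 twins(3)])
  show "locally_equiv V F (local_comp (local_comp (local_comp F (vs!i)) (vs!j)) (vs!i))"
    by (rule locally_equiv.step[OF locally_equiv.step[OF locally_equiv_local_comp[OF twins(1)] twins(3)]
          twins(1)])
  show "\<forall>x\<in>A \<union> B. \<forall>y\<in>A \<union> B.
      local_comp (local_comp (local_comp F (vs!i)) (vs!j)) (vs!i) x y = F x y"
    by (rule pivot_twins_agrees_on[OF g adj twins(2,4,5)])
  have "realises (local_comp F (vs!i)) ((!) vs) (length vs) (pattern_lc i (walk_pattern F vs))"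
    by (rule shortest_walk_realises_lc[OF g sw ij(1) i1 shortest_walk_realises[OF g s sw]])
  then have "realises (local_comp (local_comp F (vs!i)) (vs!j)) ((!) vs) (length vs)
      (pattern_lc j (pattern_lc i (walk_pattern F vs)))"
    by (rule shortest_walk_realises_lc[OF g1 sw j1 ij(3)])
  then show "realises (local_comp (local_comp (local_comp F (vs!i)) (vs!j)) (vs!i)) ((!) vs) (length vs)
      (pattern_lc i (pattern_lc j (pattern_lc i (walk_pattern F vs))))"
    by (rule shortest_walk_realises_lc[OF g2 sw ij(1) i1])
qed

lemma shortcut_nonadjacent_twins:
  assumes g: "graph V F" and s: "cut_pattern F" and sw: "shortest_walk V F vs"
    and ij: "1 \<le> i" "i < j" "j + 1 < length vs"
    and same: "adj_A0 F (vs!i) = adj_A0 F (vs!j)" "adj_B0 F (vs!i) = adj_B0 F (vs!j)"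
    and nz: "adj_A0 F (vs!i) \<or> adj_B0 F (vs!i)" and nadj: "\<not> F (vs!i) (vs!j)"
  shows "\<exists>F2 L2. equiv_walk V F F2 L2 \<and> length L2 < length vs"
proof -
  define al where "al = (\<lambda>k. adj_A0 F (vs!k))"
  define be where "be = (\<lambda>k. adj_B0 F (vs!k))"
  have s0: "walk_pattern F vs = (al, be, tight_adj al be)"
    unfolding walk_pattern_def al_def be_def by simp
  have same': "al i = al j" "be i = be j" and nz': "al i \<or> be i"
    using same nz unfolding al_def be_def by simp_all
  note comp = twins_local_comp[OF g s sw ij same nadj, unfolded s0]
  have "tight_adj al be i j = F (vs!i) (vs!j)"
    using shortest_walk_realises[OF g s sw] ij unfolding s0 realises_def by auto
  with nadj have edge: "\<not> tight_adj al be i j" by simp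
  consider (near) "j = Suc i" | (far) "Suc i < j" using ij by linarith
  then show ?thesis
  proof cases
    case near
    then have "al i" "be i" "al j" "be j" using edge same' unfolding tight_adj_def by auto
    show ?thesis
    proof (rule shortcut_walk[OF s sw comp])
      show "1 \<le> i" "i < Suc (Suc i)" "Suc (Suc i) < length vs" using ij near by auto
      show "pattern_link (pattern_lc j (pattern_lc i (al, be, tight_adj al be))) p q"
        if "skip_step i (Suc (Suc i)) p q" for p q
        unfolding near
        using pattern_link_lc_twins_near[where al = al and be = be, OF ij(1) _ _ _ _ that]
          \<open>al i\<close> \<open>be i\<close> \<open>al j\<close> \<open>be j\<close> near by simp
    qed
  next
    case far
    then have "al i \<noteq> be i" using edge same' nz' unfolding tight_adj_def by auto
    show ?thesis
    proof (rule shortcut_walk[OF s sw comp])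
      show "1 \<le> i" "i < Suc i" "Suc i < length vs" using ij by auto
      show "pattern_link (pattern_lc j (pattern_lc i (al, be, tight_adj al be))) p q"
        if "skip_step i (Suc i) p q" for p q
        using pattern_link_lc_twins_far[where al = al and be = be, OF ij(1) far same' \<open>al i \<noteq> be i\<close> that] .
    qed
  qed
qed

lemma shortcut_adjacent_twins:
  assumes g: "graph V F" and s: "cut_pattern F" and sw: "shortest_walk V F vs"
    and ij: "1 \<le> i" "i < j" "j + 1 < length vs"
    and same: "adj_A0 F (vs!i) = adj_A0 F (vs!j)" "adj_B0 F (vs!i) = adj_B0 F (vs!j)"
    and nz: "adj_A0 F (vs!i) \<or> adj_B0 F (vs!i)" and adj: "F (vs!i) (vs!j)"
  shows "\<exists>F2 L2. equiv_walk V F F2 L2 \<and> length L2 < length vs"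
proof -
  define al where "al = (\<lambda>k. adj_A0 F (vs!k))"
  define be where "be = (\<lambda>k. adj_B0 F (vs!k))"
  have s0: "walk_pattern F vs = (al, be, tight_adj al be)"
    unfolding walk_pattern_def al_def be_def by simp
  have same': "al i = al j" "be i = be j" and nz': "al i \<or> be i"
    using same nz unfolding al_def be_def by simp_all
  note comp = twins_pivot[OF g s sw ij same adj, unfolded s0]
  have "tight_adj al be i j = F (vs!i) (vs!j)"
    using shortest_walk_realises[OF g s sw] ij unfolding s0 realises_def by auto
  with adj have edge: "tight_adj al be i j" by simp
  consider (near) "j = Suc i" | (far) "Suc i < j" using ij by linarith
  then show ?thesis
  proof cases
    case near
    then have "al i \<noteq> be i" using edge same' nz' unfolding tight_adj_def by auto
    show ?thesis
    proof (rule shortcut_walk[OF s sw comp])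
      show "1 \<le> i" "i < Suc (Suc i)" "Suc (Suc i) < length vs" using ij near by auto
      show "pattern_link (pattern_lc i (pattern_lc j (pattern_lc i (al, be, tight_adj al be)))) p q"
        if "skip_step i (Suc (Suc i)) p q" for p q
        using pattern_link_pivot_near[where al = al and be = be, OF ij(1) _ _ \<open>al i \<noteq> be i\<close> that]
          same' near by simp
    qed
  next
    case far
    then have "al i" "be i" "al j" "be j" using edge same' unfolding tight_adj_def by auto
    show ?thesis
    proof (rule shortcut_walk[OF s sw comp])
      show "1 \<le> i" "i < Suc i" "Suc i < length vs" using ij by auto
      show "pattern_link (pattern_lc i (pattern_lc j (pattern_lc i (al, be, tight_adj al be)))) p q"
        if "skip_step i (Suc i) p q" for p q
        using pattern_link_pivot_far[where al = al and be = be, OF ij(1) far \<open>al i\<close> \<open>be i\<close>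
            \<open>al j\<close> \<open>be j\<close> that] .
    qed
  qed
qed

lemma card_non_harmless_types:
  "card {t. \<not> harmless_type (fst t) (snd t)} =
     (if card A0 = 1 \<and> card B0 = 1 then 1 else if card A0 = 1 \<or> card B0 = 1 then 2 else 3)"
proof -
  have "{t. \<not> harmless_type (fst t) (snd t)} =
      {(True, True)} \<union> (if card A0 = 1 then {} else {(True, False)}) \<union>
      (if card B0 = 1 then {} else {(False, True)})"
    by (auto simp: harmless_type_def split_paired_all)
  then show ?thesis by simp
qed

lemma shortest_walk_length_bound:
  assumes g: "graph V F" and s: "cut_pattern F" and sw: "shortest_walk V F vs"
    and no_shortcut: "\<nexists>F2 L2. equiv_walk V F F2 L2 \<and> length L2 < length vs"
  shows "length vs \<le> card {t. \<not> harmless_type (fst t) (snd t)} + 2"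
proof -
  let ?I = "{1..<length vs - 1}"
  define T where "T = {t. \<not> harmless_type (fst t) (snd t)}"
  define type where "type k = (adj_A0 F (vs!k), adj_B0 F (vs!k))" for k
  have types: "type ` ?I \<subseteq> T"
    using shortcut_harmless[OF g s sw] no_shortcut unfolding T_def type_def by fastforce
  have no_twins: False if "i \<in> ?I" "j \<in> ?I" "i < j" "type i = type j" for i j
  proof -
    have "adj_A0 F (vs!i) = adj_A0 F (vs!j)" "adj_B0 F (vs!i) = adj_B0 F (vs!j)"
      using that(4) unfolding type_def by auto
    moreover have "type i \<in> T" using types that(1) by blast
    then have "\<not> harmless_type (adj_A0 F (vs!i)) (adj_B0 F (vs!i))"
      unfolding T_def type_def by simp
    then have "adj_A0 F (vs!i) \<or> adj_B0 F (vs!i)"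
      unfolding harmless_type_def by blast
    moreover have "1 \<le> i" "j + 1 < length vs" using that(1,2) by auto
    ultimately show False
      using shortcut_adjacent_twins[OF g s sw] shortcut_nonadjacent_twins[OF g s sw] no_shortcut that(3)
      by (cases "F (vs!i) (vs!j)") blast+
  qed
  have "inj_on type ?I"
  proof (rule inj_onI)
    fix i j assume "i \<in> ?I" "j \<in> ?I" "type i = type j"
    then show "i = j" using no_twins[of i j] no_twins[of j i] by (cases i j rule: linorder_cases) auto
  qed
  then have "card ?I \<le> card T" using types by (rule card_inj_on_le) simp
  then show ?thesis unfolding T_def by simp
qed

lemma shortest_walk_blocking_sequence:
  assumes s: "cut_pattern F" and sw: "shortest_walk V F vs"
  shows "blocking_sequence V F A B vs"
  unfolding blocking_sequence_def
proof (intro conjI allI impI)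
  have dis: "set vs \<inter> (A \<union> B) = {}" using sw unfolding shortest_walk_def by blast
  show "set vs \<subseteq> V - (A \<union> B)" using sw unfolding shortest_walk_def by blast
  show "blocking_cond F A B vs" using blocking_cond_iff_walk[OF s dis] sw unfolding shortest_walk_def by blast
next
  fix ws assume ws: "subseq ws vs \<and> ws \<noteq> vs"
  show "\<not> blocking_cond F A B ws"
  proof
    assume bc: "blocking_cond F A B ws"
    have sub: "set ws \<subseteq> set vs" using ws by (auto elim: list_emb_set)
    then have "set ws \<inter> (A \<union> B) = {}" using sw unfolding shortest_walk_def by blast
    then have "walk (wild_A F) (wild_B F) (linked F) ws" using blocking_cond_iff_walk[OF s] bc by blast
    then have "length vs \<le> length ws" using sw sub unfolding shortest_walk_def by blast
    moreover have "length ws \<le> length vs" using ws list_emb_length by blast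
    ultimately have "ws = vs" using ws subseq_same_length by (metis le_antisym)
    then show False using ws by blast
  qed
qed

lemma least_equiv_walk:
  assumes "equiv_walk V E E' L0"
  obtains F vs where "equiv_walk V E F vs" "\<And>F' L. equiv_walk V E F' L \<Longrightarrow> length vs \<le> length L"
proof -
  define n where "n = (LEAST n. \<exists>F L. equiv_walk V E F L \<and> length L = n)"
  have "\<exists>F L. equiv_walk V E F L \<and> length L = n"
    unfolding n_def by (rule LeastI[of _ "length L0"]) (use assms in blast)
  then obtain F vs where fv: "equiv_walk V E F vs" "length vs = n" by blast
  have "length vs \<le> length L" if "equiv_walk V E F' L" for F' L
    unfolding fv(2) n_def by (rule Least_le) (use that in blast)
  with fv(1) show thesis by (rule that)
qed

lemma least_equiv_walk_shortest:
  assumes "equiv_walk V E F vs" "\<And>F' L. equiv_walk V E F' L \<Longrightarrow> length vs \<le> length L"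
  shows "shortest_walk V F vs"
  using assms unfolding shortest_walk_def equiv_walk_def by blast

end

theorem proposition5p6:
  fixes V :: "'a set" and E :: "'a \<Rightarrow> 'a \<Rightarrow> bool" and A B A0 B0 :: "'a set"
  assumes "graph V E" and "prime_graph V E"
    and "A \<subseteq> V" and "B \<subseteq> V" and "A \<inter> B = {}"
    and "card A \<ge> 2" and "card B \<ge> 2"
    and "A0 \<noteq> {}" and "A0 \<subseteq> A" and "B0 \<noteq> {}" and "B0 \<subseteq> B"
    and "\<forall>x\<in>A. \<forall>y\<in>B. E x y \<longleftrightarrow> x \<in> A0 \<and> y \<in> B0"
  shows "\<exists>E'. locally_equiv V E E' \<and>
           (\<forall>x\<in>A \<union> B. \<forall>y\<in>A \<union> B. E' x y \<longleftrightarrow> E x y) \<and>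
           (\<exists>vs. blocking_sequence V E' A B vs \<and>
                 length vs \<le> (if card A0 = 1 \<and> card B0 = 1 then 3
                              else if card A0 = 1 \<or> card B0 = 1 then 4 else 6))"
proof -
  have "finite V" using assms(1) unfolding graph_def by blast
  then interpret rank_one_cut A B A0 B0
    using assms by unfold_locales (auto intro: finite_subset)
  have s: "cut_pattern E" using assms(12) unfolding cut_pattern_def by blast
  obtain L0 where "equiv_walk V E E L0"
    using prime_graph_has_walk[OF assms(1-4) s assms(6,7)] unfolding equiv_walk_def
    by (metis locally_equiv.refl)
  then obtain F vs where ew: "equiv_walk V E F vs"
    and least: "\<And>F' L. equiv_walk V E F' L \<Longrightarrow> length vs \<le> length L"
    using least_equiv_walk by blast
  have sw: "shortest_walk V F vs" using least_equiv_walk_shortest ew least by blast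
  have gF: "graph V F" and sF: "cut_pattern F"
    using ew graph_locally_equiv[OF _ assms(1)] cut_pattern_cong[OF s] unfolding equiv_walk_def by auto
  have "\<nexists>F2 L2. equiv_walk V F F2 L2 \<and> length L2 < length vs"
    using least equiv_walk_trans[OF ew] by (meson not_le)
  then have "length vs \<le> card {t. \<not> harmless_type (fst t) (snd t)} + 2"
    by (rule shortest_walk_length_bound[OF gF sF sw])
  then have "length vs \<le> (if card A0 = 1 \<and> card B0 = 1 then 3
                            else if card A0 = 1 \<or> card B0 = 1 then 4 else 6)"
    unfolding card_non_harmless_types by auto
  moreover have "blocking_sequence V F A B vs"
    by (rule shortest_walk_blocking_sequence[OF sF sw])
  ultimately show ?thesis
    using ew unfolding equiv_walk_def by blast
qed

end
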